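(* Let $q$ be a power of an odd prime, $c\in\mathbb{F}_q^*$, $b\in\mathbb{F}_q$ a nonsquare, $\beta\in\mathbb{F}_{q^2}$ with $\beta^2=b$, and $f(X)=c(X^{q+1}+X^2)$ on $\mathbb{F}_{q^2}$. If $\alpha\in\beta\mathbb{F}_q=\{y\beta: y\in\mathbb{F}_q\}$, then the number of $\gamma\in\mathbb{F}_{q^2}$ with $f(\gamma)=\alpha$ is $q$ if $\alpha=0$ and $0$ if $\alpha\neq0$. *)

theory Defs
  imports "HOL-Computational_Algebra.Primes"
begin

text \<open>The subfield F_q of a finite field F (used with |F| = q^2): the fixed points of x \<mapsto> x^q.\<close>
definition subfield_Fq :: "nat \<Rightarrow> 'a::field set" where
  "subfield_Fq q = {x. x ^ q = x}"

end

theory Submission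
  imports Defs "HOL-Computational_Algebra.Polynomial" "HOL-Number_Theory.Residues"
begin

text \<open>
  Write \<open>f(\<gamma>) = c \<gamma> (\<gamma>^q + \<gamma>)\<close>. Since \<open>x \<mapsto> x^q\<close> is an additive involution of
  \<open>\<bbbF>\<^sub>q\<^sub>2\<close> fixing \<open>c\<close>, the trace of \<open>f(\<gamma>)\<close> is \<open>f(\<gamma>)^q + f(\<gamma>) = c (\<gamma>^q + \<gamma>)^2\<close>.
  As \<open>\<beta>\<close> is not in \<open>\<bbbF>\<^sub>q\<close> but \<open>\<beta>^2\<close> is, \<open>\<beta>^q = -\<beta>\<close>, and \<open>\<beta>\<bbbF>\<^sub>q\<close> is exactly the set of
  trace-zero elements \<open>x^q = -x\<close>. So a preimage \<open>\<gamma>\<close> of \<open>\<alpha> \<in> \<beta>\<bbbF>\<^sub>q\<close> has trace zero, which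
  forces \<open>f(\<gamma>) = 0\<close>; and the preimage of \<open>0\<close> is \<open>\<beta>\<bbbF>\<^sub>q\<close> itself, of size \<open>|\<bbbF>\<^sub>q| = q\<close>.
\<close>

lemma power_card_eq_self:
  fixes x :: "'a::{finite,field}"
  shows "x ^ card (UNIV :: 'a set) = x"
proof (cases "x = 0")
  case False
  let ?U = "UNIV - {0::'a}"
  have "(\<Prod>y\<in>?U. x * y) = (\<Prod>y\<in>?U. y)"
    by (rule prod.reindex_bij_witness[of _ "\<lambda>y. y / x" "\<lambda>y. x * y"]) (use False in auto)
  then have "x ^ card ?U * \<Prod>?U = 1 * \<Prod>?U"
    by (simp add: prod.distrib)
  then have "x ^ (card (UNIV :: 'a set) - 1) = 1"
    by (simp add: card_Diff_singleton)
  moreover have "x ^ card (UNIV :: 'a set) = x * x ^ (card (UNIV :: 'a set) - 1)"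
    using finite_UNIV_card_ge_0[where ?'a = 'a] by (simp add: power_eq_if)
  ultimately show ?thesis
    by simp
qed (simp add: finite_UNIV_card_ge_0)

lemma prime_CHAR_finite_field: "prime CHAR('a::{finite,field})"
  by (rule prime_CHAR_semidom, rule finite_imp_CHAR_pos) simp

lemma CHAR_eq_if_card_eq_prime_power:
  assumes "prime p" "card (UNIV :: 'a::{finite,field} set) = p ^ n"
  shows "CHAR('a) = p"
proof -
  have "CHAR('a) dvd p ^ n"
    using CHAR_dvd_CARD assms(2) by metis
  then have "CHAR('a) dvd p"
    using prime_CHAR_finite_field prime_dvd_power by blast
  then show ?thesis
    using prime_CHAR_finite_field assms(1) primes_dvd_imp_eq by blast
qed

lemma power_CHAR_power_add:
  fixes x y :: "'a::{finite,field}"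
  assumes "q = CHAR('a) ^ k"
  shows "(x + y) ^ q = x ^ q + y ^ q"
  using freshmans_dream'[OF prime_CHAR_finite_field assms] .

lemma card_roots_power_plus_linear_le:
  fixes a b :: "'a::field"
  assumes "q > 1"
  shows "card {x. x ^ q + a * x + b = 0} \<le> q"
proof -
  define P where "P = Polynomial.monom 1 q + [:b, a:]"
  have "degree [:b, a:] < degree (Polynomial.monom (1::'a) q)"
    using assms by (simp add: degree_monom_eq)
  then have deg: "degree P = q"
    unfolding P_def by (simp add: degree_add_eq_left degree_monom_eq)
  then have "P \<noteq> 0"
    using assms by auto
  have "{x. x ^ q + a * x + b = 0} = {x. poly P x = 0}"
    unfolding P_def by (auto simp: poly_monom algebra_simps)
  then show ?thesis
    using card_poly_roots_bound[OF \<open>P \<noteq> 0\<close>] deg by simp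
qed

lemma power_power_eq_self_if_card_eq_square:
  fixes x :: "'a::{finite,field}"
  assumes "card (UNIV :: 'a set) = q ^ 2"
  shows "(x ^ q) ^ q = x"
  using power_card_eq_self[of x] assms by (simp add: power2_eq_square flip: power_mult)

lemma card_subfield_Fq:
  assumes "card (UNIV :: 'a::{finite,field} set) = q ^ 2" and "q = CHAR('a) ^ k" and "k > 0"
  shows "card (subfield_Fq q :: 'a set) = q"
proof -
  have "q > 1"
    using assms(2,3) prime_CHAR_finite_field by (metis one_less_power prime_gt_1_nat)
  have "card {x::'a. x ^ q + (-1) * x + 0 = 0} \<le> q"
    by (rule card_roots_power_plus_linear_le[OF \<open>q > 1\<close>])
  then have le: "card (subfield_Fq q :: 'a set) \<le> q"
    by (simp add: subfield_Fq_def)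
  \<comment> \<open>The trace \<open>x^q + x\<close> maps into the subfield, with fibres of size at most \<open>q\<close>.\<close>
  define T where "T x = x ^ q + x" for x :: 'a
  have T_in: "T x \<in> subfield_Fq q" for x
    by (simp add: subfield_Fq_def T_def power_CHAR_power_add[OF assms(2)]
        power_power_eq_self_if_card_eq_square[OF assms(1)])
  have fibre_le: "card {x. T x = t} \<le> q" for t
  proof -
    have "card {x::'a. x ^ q + 1 * x + (-t) = 0} \<le> q"
      by (rule card_roots_power_plus_linear_le[OF \<open>q > 1\<close>])
    then show ?thesis
      by (simp add: T_def eq_neg_iff_add_eq_0 flip: diff_eq_eq)
  qed
  have "(\<Union>t\<in>subfield_Fq q. {x::'a. T x = t}) = UNIV"
    using T_in by blast
  then have "q * q = card (\<Union>t\<in>subfield_Fq q. {x::'a. T x = t})"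
    using assms(1) by (simp add: power2_eq_square)
  also have "\<dots> \<le> (\<Sum>t\<in>subfield_Fq q. card {x. T x = t})"
    by (rule card_UN_le) simp
  also have "\<dots> \<le> card (subfield_Fq q :: 'a set) * q"
    using sum_bounded_above[of "subfield_Fq q" "\<lambda>t. card {x. T x = t}" q] fibre_le by simp
  finally show ?thesis
    using le \<open>q > 1\<close> by (simp add: mult_le_cancel2 le_antisym)
qed

lemma power_eq_neg_if_square_in_subfield_Fq:
  fixes \<beta> :: "'a::field"
  assumes "\<beta> ^ 2 \<in> subfield_Fq q" and "\<beta> \<notin> subfield_Fq q"
  shows "\<beta> ^ q = - \<beta>"
proof -
  have "(\<beta> ^ q) ^ 2 = (\<beta> ^ 2) ^ q"
    by (simp add: mult.commute flip: power_mult)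
  also have "\<dots> = \<beta> ^ 2"
    using assms(1) by (simp add: subfield_Fq_def)
  finally have "(\<beta> ^ q - \<beta>) * (\<beta> ^ q + \<beta>) = 0"
    by (simp add: algebra_simps power2_eq_square)
  then show ?thesis
    using assms(2) by (simp add: subfield_Fq_def eq_neg_iff_add_eq_0)
qed

lemma image_times_subfield_Fq:
  fixes \<beta> :: "'a::field"
  assumes "\<beta> \<noteq> 0" and "\<beta> ^ q = - \<beta>"
  shows "(\<lambda>y. y * \<beta>) ` subfield_Fq q = {x. x ^ q = - x}"
proof
  show "(\<lambda>y. y * \<beta>) ` subfield_Fq q \<subseteq> {x. x ^ q = - x}"
    using assms(2) by (auto simp: subfield_Fq_def power_mult_distrib)
  show "{x. x ^ q = - x} \<subseteq> (\<lambda>y. y * \<beta>) ` subfield_Fq q"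
  proof
    fix x :: 'a
    assume "x \<in> {x. x ^ q = - x}"
    then have "x / \<beta> \<in> subfield_Fq q"
      using assms(2) by (simp add: subfield_Fq_def power_divide)
    then show "x \<in> (\<lambda>y. y * \<beta>) ` subfield_Fq q"
      using assms(1) by (intro image_eqI[of _ _ "x / \<beta>"]) simp_all
  qed
qed

lemma solution_set_eq_if_power_eq_neg:
  fixes c \<alpha> :: "'a::field"
  assumes frob: "\<And>x y :: 'a. (x + y) ^ q = x ^ q + y ^ q"
    and invol: "\<And>x :: 'a. (x ^ q) ^ q = x"
    and c: "c ^ q = c" "c \<noteq> 0"
    and alpha: "\<alpha> ^ q = - \<alpha>"
  shows "{\<gamma>. c * (\<gamma> ^ (q + 1) + \<gamma> ^ 2) = \<alpha>} = (if \<alpha> = 0 then {\<gamma>. \<gamma> ^ q = - \<gamma>} else {})"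
proof -
  have f_eq: "c * (\<gamma> ^ (q + 1) + \<gamma> ^ 2) = c * \<gamma> * (\<gamma> ^ q + \<gamma>)" for \<gamma>
    by (simp add: algebra_simps power2_eq_square)
  have trace_zero: "\<gamma> ^ q + \<gamma> = 0" if "c * \<gamma> * (\<gamma> ^ q + \<gamma>) = \<alpha>" for \<gamma>
  proof -
    have "\<alpha> ^ q = c ^ q * \<gamma> ^ q * (\<gamma> ^ q + \<gamma>) ^ q"
      unfolding that[symmetric] by (simp only: power_mult_distrib)
    also have "\<dots> = c * \<gamma> ^ q * (\<gamma> + \<gamma> ^ q)"
      by (simp only: frob invol c)
    finally have "c * (\<gamma> ^ q + \<gamma>) ^ 2 = \<alpha> ^ q + \<alpha>"
      using that by (simp add: algebra_simps power2_eq_square)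
    then show ?thesis
      using alpha c by simp
  qed
  show ?thesis
  proof (cases "\<alpha> = 0")
    case True
    have "0 ^ q = (0::'a)"
      using frob[of 0 0] by (metis add_cancel_right_right)
    then have "c * \<gamma> * (\<gamma> ^ q + \<gamma>) = 0 \<longleftrightarrow> \<gamma> ^ q = - \<gamma>" for \<gamma>
      using c(2) by (auto simp: eq_neg_iff_add_eq_0)
    then show ?thesis
      unfolding f_eq using True by simp
  next
    case False
    then show ?thesis
      unfolding f_eq using trace_zero by fastforce
  qed
qed

theorem theorem15:
  fixes q :: nat and c b \<beta> \<alpha> :: "'a::{finite, field}"
  assumes q_pow: "\<exists>p k. prime p \<and> odd p \<and> k > 0 \<and> q = p ^ k"
    and card_F: "card (UNIV :: 'a set) = q ^ 2"
    and c_in: "c \<in> subfield_Fq q" and c_nz: "c \<noteq> 0"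
    and b_in: "b \<in> subfield_Fq q"
    and b_nonsq: "\<not> (\<exists>y \<in> subfield_Fq q. y ^ 2 = b)"
    and beta: "\<beta> ^ 2 = b"
    and alpha: "\<alpha> \<in> (\<lambda>y. y * \<beta>) ` subfield_Fq q"
  shows "card {\<gamma>::'a. c * (\<gamma> ^ (q + 1) + \<gamma> ^ 2) = \<alpha>} = (if \<alpha> = 0 then q else 0)"
proof -
  obtain p k where p: "prime p" and k: "k > 0" and q: "q = p ^ k"
    using q_pow by blast
  have "card (UNIV :: 'a set) = p ^ (k * 2)"
    using card_F q by (simp add: power_mult)
  then have "CHAR('a) = p"
    by (rule CHAR_eq_if_card_eq_prime_power[OF p])
  then have q_CHAR: "q = CHAR('a) ^ k"
    using q by simp
  have "\<beta> \<notin> subfield_Fq q" and "\<beta> ^ 2 \<in> subfield_Fq q"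
    using b_nonsq b_in beta by blast+
  then have beta_conj: "\<beta> ^ q = - \<beta>"
    by (rule power_eq_neg_if_square_in_subfield_Fq[rotated])
  have "\<beta> \<noteq> 0"
    using \<open>\<beta> \<notin> subfield_Fq q\<close> p q by (auto simp: subfield_Fq_def prime_gt_0_nat)
  note anti_fixed = image_times_subfield_Fq[OF this beta_conj]
  have "{\<gamma>::'a. c * (\<gamma> ^ (q + 1) + \<gamma> ^ 2) = \<alpha>} = (if \<alpha> = 0 then {\<gamma>. \<gamma> ^ q = - \<gamma>} else {})"
  proof (rule solution_set_eq_if_power_eq_neg)
    show "(x + y) ^ q = x ^ q + y ^ q" for x y :: 'a
      by (rule power_CHAR_power_add[OF q_CHAR])
    show "(x ^ q) ^ q = x" for x :: 'a
      by (rule power_power_eq_self_if_card_eq_square[OF card_F])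
    show "c ^ q = c" "c \<noteq> 0" "\<alpha> ^ q = - \<alpha>"
      using c_in c_nz alpha anti_fixed by (auto simp: subfield_Fq_def)
  qed
  moreover have "card {\<gamma>::'a. \<gamma> ^ q = - \<gamma>} = q"
    using card_image[of "\<lambda>y. y * \<beta>" "subfield_Fq q"] \<open>\<beta> \<noteq> 0\<close>
      card_subfield_Fq[OF card_F q_CHAR k] anti_fixed by (simp add: inj_on_def)
  ultimately show ?thesis
    by simp
qed

end
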